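(* Let $n\ge 2$ be an integer, $k,c_b>0$, $\rho_0>0$, and let $\lambda_{1,0},\dots,\lambda_{n,0}$ be real numbers with $\lambda_{1,0}=\cdots=\lambda_{J,0}<\lambda_{J+1,0}\le\cdots\le\lambda_{n,0}$ for some integer $1\le J\le n$. Consider the system $$\lambda_i'=-\lambda_i^2+\frac{k}{n}(\rho-c_b)\ (i=1,\dots,n),\qquad \rho'=-\rho\lambda,\quad \lambda=\sum_{i=1}^n\lambda_i,\qquad \rho(0)=\rho_0,\ \lambda_i(0)=\lambda_{i,0},$$ suppose its maximal interval of existence is $[0,t_B)$ with $0<t_B<\infty$, and let $u_i(t)=e^{\int_0^t\lambda_i(s)\,ds}$. Then for every $J<j\le n$ the functions $u_1'u_j$ and $u_1u_j'$ are bounded on $[0,t_B)$, and $\lim_{t\to t_B^-}u_1(t)u_j(t)=0$.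
   Context: Solutions are real-valued and continuously differentiable on $[0,t_B)$. *)

theory Defs
  imports "HOL-Analysis.Analysis"
begin

definition is_solution ::
  "nat \<Rightarrow> real \<Rightarrow> real \<Rightarrow> real \<Rightarrow> (nat \<Rightarrow> real) \<Rightarrow> real
     \<Rightarrow> (nat \<Rightarrow> real \<Rightarrow> real) \<Rightarrow> (real \<Rightarrow> real) \<Rightarrow> bool" where
  "is_solution n k cb rho0 lam0 T lam rho \<longleftrightarrow>
     0 < T \<and>
     rho 0 = rho0 \<and> (\<forall>i\<in>{1..n}. lam i 0 = lam0 i) \<and>
     continuous_on {0..<T} rho \<and> (\<forall>i\<in>{1..n}. continuous_on {0..<T} (lam i)) \<and>
     (\<forall>t\<in>{0..<T}.
        (\<forall>i\<in>{1..n}. (lam i has_real_derivative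
            (- (lam i t)\<^sup>2 + k / real n * (rho t - cb))) (at t within {0..<T})) \<and>
        (rho has_real_derivative (- rho t * (\<Sum>i=1..n. lam i t))) (at t within {0..<T}))"

definition maximal_solution ::
  "nat \<Rightarrow> real \<Rightarrow> real \<Rightarrow> real \<Rightarrow> (nat \<Rightarrow> real) \<Rightarrow> real
     \<Rightarrow> (nat \<Rightarrow> real \<Rightarrow> real) \<Rightarrow> (real \<Rightarrow> real) \<Rightarrow> bool" where
  "maximal_solution n k cb rho0 lam0 tB lam rho \<longleftrightarrow>
     is_solution n k cb rho0 lam0 tB lam rho \<and>
     \<not> (\<exists>T>tB. \<exists>lam' rho'. is_solution n k cb rho0 lam0 T lam' rho')"

end

theory Submission
  imports Defs
begin

text \<open>
  All \<open>\<lambda>\<^sub>i\<close> solve the same Riccati equation \<open>y' = -y\<^sup>2 + q(t)\<close> with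
  \<open>q = k/n (\<rho> - c\<^sub>b)\<close>, and \<open>\<rho> = \<rho>\<^sub>0 / (u\<^sub>1 \<cdots> u\<^sub>n) > 0\<close> gives \<open>q \<ge> -K\<close> with
  \<open>K = k c\<^sub>b / n\<close>. Moreover \<open>(\<lambda>\<^sub>i - \<lambda>\<^sub>j) u\<^sub>i u\<^sub>j\<close> is constant, so the initial
  ordering persists and \<open>\<lambda>\<^sub>1\<close> is the smallest \<open>\<lambda>\<^sub>i\<close>. If \<open>\<lambda>\<^sub>1\<close> were bounded below,
  then \<open>\<rho>\<close> and hence all \<open>\<lambda>\<^sub>i\<close> would be bounded and the solution would extend past
  \<open>t\<^sub>B\<close> (local existence by Picard iteration); comparison with \<open>y' = -y\<^sup>2 - K\<close> upgrades
  this to \<open>\<lambda>\<^sub>1 \<rightarrow> -\<infinity>\<close>.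

  For \<open>j > J\<close> we have \<open>u\<^sub>1 u\<^sub>j = (\<lambda>\<^sub>j\<^sub>,\<^sub>0 - \<lambda>\<^sub>1\<^sub>,\<^sub>0) / (\<lambda>\<^sub>j - \<lambda>\<^sub>1)\<close>, so
  \<open>u\<^sub>1' u\<^sub>j\<close>, \<open>u\<^sub>1 u\<^sub>j'\<close> and \<open>u\<^sub>1 u\<^sub>j\<close> are controlled by the ratio
  \<open>r = \<lambda>\<^sub>1 / (\<lambda>\<^sub>j - \<lambda>\<^sub>1)\<close>. Once \<open>\<lambda>\<^sub>1\<^sup>2 > 2K\<close>, \<open>r\<close> is non-decreasing whenever
  \<open>r < -2\<close>, so \<open>r\<close> stays bounded, and \<open>u\<^sub>1 u\<^sub>j = (\<lambda>\<^sub>j\<^sub>,\<^sub>0 - \<lambda>\<^sub>1\<^sub>,\<^sub>0) r / \<lambda>\<^sub>1 \<rightarrow> 0\<close>.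
\<close>

section \<open>Local existence by Picard iteration\<close>

text \<open>States of the system live in the space \<open>nat \<Rightarrow>\<^sub>C real\<close> of bounded sequences; the
  library proves completeness of \<open>'a \<Rightarrow>\<^sub>C 'b\<close> only for a metric space \<open>'a\<close>.\<close>

instantiation nat :: metric_space
begin

definition dist_nat :: "nat \<Rightarrow> nat \<Rightarrow> real" where
  "dist_nat m n = dist (real m) (real n)"

definition uniformity_nat :: "(nat \<times> nat) filter" where
  "uniformity_nat = (INF e\<in>{0<..}. principal {(x, y). dist x y < e})"

instance
proof
  show "open U \<longleftrightarrow> (\<forall>x\<in>U. eventually (\<lambda>(x', y). x' = x \<longrightarrow> y \<in> U) uniformity)"
    for U :: "nat set"
  proof -
    have "eventually (\<lambda>(x', y). x' = x \<longrightarrow> y \<in> U) uniformity" if "x \<in> U" for x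
      unfolding uniformity_nat_def
    proof (rule eventually_INF1[of 1])
      have "y = x" if "\<bar>real x - real y\<bar> < 1" for y
        using that by simp
      then show "eventually (\<lambda>(x', y). x' = x \<longrightarrow> y \<in> U) (principal {(x, y). dist x y < 1})"
        using that by (auto simp: eventually_principal dist_nat_def dist_real_def)
    qed simp
    then show ?thesis using open_discrete[of U] by auto
  qed
qed (auto simp: uniformity_nat_def dist_nat_def dist_triangle2)

end

instance bcontfun :: (metric_space, banach) banach ..

text \<open>Picard iteration runs in the complete space \<open>real \<Rightarrow>\<^sub>C 'a\<close>, on the functions that stay
  in the ball and are constant outside \<open>[t\<^sub>0, t\<^sub>0 + h]\<close>.\<close>

locale picard_iteration =
  fixes F :: "'a::banach \<Rightarrow> 'a" and x0 :: 'a and r h L M t0 :: real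
  assumes r: "0 < r" and h: "0 < h" and L: "0 \<le> L"
    and lipschitz: "\<And>x y. x \<in> cball x0 r \<Longrightarrow> y \<in> cball x0 r \<Longrightarrow>
      norm (F x - F y) \<le> L * norm (x - y)"
    and bounded: "\<And>x. x \<in> cball x0 r \<Longrightarrow> norm (F x) \<le> M"
    and hM: "h * M \<le> r" and hL: "h * L \<le> 1/2"
begin

definition clamp :: "real \<Rightarrow> real" where
  "clamp t = max t0 (min (t0 + h) t)"

definition trajectories :: "(real \<Rightarrow>\<^sub>C 'a) set" where
  "trajectories = {g :: real \<Rightarrow>\<^sub>C 'a. (\<forall>t. g t \<in> cball x0 r) \<and> (\<forall>t. g t = g (clamp t))}"

definition picard :: "(real \<Rightarrow>\<^sub>C 'a) \<Rightarrow> real \<Rightarrow> 'a" where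
  "picard g t = x0 + integral {t0..clamp t} (\<lambda>s. F (g s))"

lemma clamp_in: "clamp t \<in> {t0..t0+h}"
  using h by (auto simp: clamp_def)

lemma continuous_clamp: "continuous_on UNIV clamp"
  unfolding clamp_def by (intro continuous_intros)

lemma clamp_id: "t \<in> {t0..t0+h} \<Longrightarrow> clamp t = t"
  by (auto simp: clamp_def)

lemma M_nonneg: "0 \<le> M"
  using bounded[of x0] r by (intro order_trans[OF norm_ge_zero]) simp

lemma F_continuous: "continuous_on (cball x0 r) F"
  using lipschitz L
  by (intro lipschitz_on_continuous_on[of L]) (auto simp: lipschitz_on_def dist_norm)

lemma integrand_continuous:
  "g \<in> trajectories \<Longrightarrow> continuous_on {t0..t0+h} (\<lambda>s. F (g s))"
  unfolding trajectories_def by (intro continuous_on_compose2[OF F_continuous]) auto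

lemma picard_integral_bound:
  assumes "g \<in> trajectories"
  shows "norm (integral {t0..clamp t} (\<lambda>s. F (g s))) \<le> h * M"
proof -
  have "norm (integral {t0..clamp t} (\<lambda>s. F (g s))) \<le> M * (clamp t - t0)"
    using clamp_in[of t] continuous_on_subset[OF integrand_continuous[OF assms]] bounded assms
    by (intro integral_bound) (auto simp: trajectories_def)
  also have "\<dots> \<le> h * M"
    using clamp_in[of t] M_nonneg by (simp add: mult.commute mult_left_mono)
  finally show ?thesis .
qed

lemma picard_bcontfun: "g \<in> trajectories \<Longrightarrow> picard g \<in> bcontfun"
proof (rule bcontfun_normI)
  assume g: "g \<in> trajectories"
  have "continuous_on {t0..t0+h} (\<lambda>c. integral {t0..c} (\<lambda>s. F (g s)))"
    by (intro indefinite_integral_continuous_1 integrable_continuous_real integrand_continuous g)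
  then have "continuous_on UNIV (\<lambda>t. integral {t0..clamp t} (\<lambda>s. F (g s)))"
    by (rule continuous_on_compose2[OF _ continuous_clamp]) (use clamp_in in blast)
  then show "continuous_on UNIV (picard g)"
    unfolding picard_def by (intro continuous_intros)
  show "norm (picard g t) \<le> norm x0 + h * M" for t
    unfolding picard_def
    by (rule order_trans[OF norm_triangle_ineq]) (simp add: picard_integral_bound[OF g])
qed

lemma picard_trajectory:
  assumes "g \<in> trajectories"
  shows "Bcontfun (picard g) \<in> trajectories"
proof -
  have "picard g t \<in> cball x0 r" for t
    using picard_integral_bound[OF assms, of t] hM by (auto simp: picard_def dist_norm)
  moreover have "clamp (clamp t) = clamp t" for t
    using clamp_id clamp_in by blast
  ultimately show ?thesis
    using picard_bcontfun[OF assms] by (auto simp: trajectories_def Bcontfun_inverse picard_def)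
qed

lemma picard_contraction:
  assumes g1: "g1 \<in> trajectories" and g2: "g2 \<in> trajectories"
  shows "dist (Bcontfun (picard g1)) (Bcontfun (picard g2)) \<le> 1/2 * dist g1 g2"
proof (rule dist_bound)
  fix t
  let ?I = "{t0..clamp t}"
  have sub: "?I \<subseteq> {t0..t0+h}" using clamp_in[of t] by auto
  have int: "(\<lambda>s. F (g s)) integrable_on ?I" if "g \<in> trajectories" for g
    by (intro integrable_continuous_real continuous_on_subset[OF integrand_continuous sub] that)
  have "dist (Bcontfun (picard g1) t) (Bcontfun (picard g2) t)
      = norm (integral ?I (\<lambda>s. F (g1 s) - F (g2 s)))"
    using picard_bcontfun[OF g1] picard_bcontfun[OF g2]
    by (simp add: Bcontfun_inverse picard_def dist_norm integral_diff[OF int[OF g1] int[OF g2]])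
  also have "\<dots> \<le> (L * dist g1 g2) * (clamp t - t0)"
  proof (rule integral_bound)
    show "continuous_on ?I (\<lambda>s. F (g1 s) - F (g2 s))"
      by (intro continuous_intros continuous_on_subset[OF integrand_continuous sub] g1 g2)
    have "norm (F (g1 s) - F (g2 s)) \<le> L * norm (g1 s - g2 s)" for s
      using g1 g2 by (intro lipschitz) (auto simp: trajectories_def)
    also have "L * norm (g1 s - g2 s) \<le> L * dist g1 g2" for s
      using dist_bounded[of g1 s g2] L by (intro mult_left_mono) (auto simp: dist_norm)
    finally show "norm (F (g1 s) - F (g2 s)) \<le> L * dist g1 g2" for s .
  qed (use clamp_in[of t] in auto)
  also have "\<dots> \<le> (L * dist g1 g2) * h"
    using clamp_in[of t] L by (intro mult_left_mono) auto
  also have "\<dots> = (h * L) * dist g1 g2"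
    by simp
  also have "\<dots> \<le> 1/2 * dist g1 g2"
    using hL by (rule mult_right_mono) simp
  finally show "dist (Bcontfun (picard g1) t) (Bcontfun (picard g2) t) \<le> 1/2 * dist g1 g2" .
qed

lemma closed_trajectories: "closed trajectories"
proof -
  have eval_continuous: "continuous_on UNIV (\<lambda>g :: real \<Rightarrow>\<^sub>C 'a. g t)" for t
    by (intro lipschitz_on_continuous_on[of 1]) (auto simp: lipschitz_on_def dist_bounded)
  have "trajectories = (\<Inter>t. (\<lambda>g :: real \<Rightarrow>\<^sub>C 'a. g t) -` cball x0 r) \<inter>
      (\<Inter>t. {g :: real \<Rightarrow>\<^sub>C 'a. g t = g (clamp t)})"
    unfolding trajectories_def by auto
  then show ?thesis
    by (simp only:) (intro closed_Int closed_INT closed_vimage closed_cball eval_continuous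
        closed_Collect_eq ballI)
qed

lemma local_solution:
  "\<exists>y. y t0 = x0 \<and> (\<forall>t\<in>{t0..t0+h}. y t \<in> cball x0 r \<and>
     (y has_vector_derivative F (y t)) (at t within {t0..t0+h}))"
proof -
  have "const_bcontfun x0 \<in> trajectories"
    using r by (simp add: trajectories_def)
  then have "\<exists>!g\<in>trajectories. Bcontfun (picard g) = g"
    using picard_trajectory picard_contraction
    by (intro Banach_fix[where c="1/2"] complete_eq_closed[THEN iffD2, OF closed_trajectories]) auto
  then obtain g where g: "g \<in> trajectories" "Bcontfun (picard g) = g"
    by blast
  have fixpoint: "g t = picard g t" for t
    using arg_cong[OF g(2), of apply_bcontfun] Bcontfun_inverse[OF picard_bcontfun[OF g(1)]] by simp
  show ?thesis
  proof (intro exI conjI ballI)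
    show "g t0 = x0" using fixpoint[of t0] h by (simp add: picard_def clamp_def)
    fix t assume t: "t \<in> {t0..t0+h}"
    show "g t \<in> cball x0 r" using g(1) by (auto simp: trajectories_def)
    have primitive: "((\<lambda>c. x0 + integral {t0..c} (\<lambda>s. F (g s))) has_vector_derivative F (g t))
        (at t within {t0..t0+h})"
      using has_vector_derivative_add[OF has_vector_derivative_const
          integral_has_vector_derivative[OF integrand_continuous[OF g(1)] t]]
      by simp
    show "(g has_vector_derivative F (g t)) (at t within {t0..t0+h})"
      by (rule has_vector_derivative_transform[OF t _ primitive])
        (subst fixpoint, simp add: picard_def clamp_id)
  qed
qed

end

lemma has_real_derivative_at_interior_Ico:
  assumes "a < t" "t < b" "(f has_real_derivative d) (at t within {a..<b})"
  shows "(f has_real_derivative d) (at t)"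
  using assms at_within_interior[of t "{a..<b}"] by simp

lemma has_real_derivative_unique_Ico:
  fixes f :: "real \<Rightarrow> real"
  assumes "t \<in> {a..<b}"
    and "(f has_real_derivative d) (at t within {a..<b})"
    and "(f has_real_derivative e) (at t within {a..<b})"
  shows "d = e"
proof -
  have "at t within {a..<b} \<noteq> bot"
    using assms(1) by (subst trivial_limit_within) (auto intro: islimpt_Ico)
  then show ?thesis
    using vector_derivative_unique_within assms(2,3)
    by (auto simp: has_real_derivative_iff_has_vector_derivative)
qed

lemma integral_has_real_derivative_Ico:
  fixes f :: "real \<Rightarrow> real"
  assumes "continuous_on {a..<b} f" "t \<in> {a..<b}"
  shows "((\<lambda>t. integral {a..t} f) has_real_derivative f t) (at t within {a..<b})"
proof -
  define c where "c = (t + b) / 2"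
  have c: "t < c" "c < b" using assms(2) by (auto simp: c_def)
  have "((\<lambda>t. integral {a..t} f) has_real_derivative f t) (at t within {a..c})"
    using assms c by (intro integral_has_real_derivative continuous_on_subset[OF assms(1)]) auto
  moreover have "at t within {a..c} = at t within {a..<b}"
    using assms(2) c by (intro at_within_nhd[where S="{..<c}"]) auto
  ultimately show ?thesis by simp
qed

lemma has_real_derivative_zero_Ico_constant:
  assumes "\<And>t. t \<in> {a..<b} \<Longrightarrow> (f has_real_derivative 0) (at t within {a..<b})"
    and "t \<in> {a..<b}"
  shows "f t = f a"
proof -
  obtain c where "\<And>t. t \<in> {a..<b} \<Longrightarrow> f t = c"
    using has_field_derivative_zero_constant[of "{a..<b}" f] assms(1) by auto
  then show ?thesis using assms(2) by force
qed

lemma has_real_derivative_glue: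
  fixes f g :: "real \<Rightarrow> real"
  assumes t0: "a \<le> t0" "t0 < b" "t0 < c"
    and f: "\<And>t. t \<in> {a..<b} \<Longrightarrow> (f has_real_derivative f' t) (at t within {a..<b})"
    and g: "\<And>t. t \<in> {t0..<c} \<Longrightarrow> (g has_real_derivative g' t) (at t within {t0..<c})"
    and agree: "f t0 = g t0" "f' t0 = g' t0"
    and t: "t \<in> {a..<c}"
  shows "((\<lambda>t. if t \<le> t0 then f t else g t) has_real_derivative
           (if t \<le> t0 then f' t else g' t)) (at t within {a..<c})"
proof -
  let ?h = "\<lambda>t. if t \<le> t0 then f t else g t"
  have left: "(?h has_real_derivative f' t) (at t within {a..t0})" if "t \<le> t0"
  proof -
    have "(f has_real_derivative f' t) (at t within {a..t0})"
      using f[of t] t that t0 by (auto intro: has_field_derivative_subset)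
    then show ?thesis
      unfolding has_real_derivative_iff_has_vector_derivative
      by (rule has_vector_derivative_transform[rotated 2]) (use t that in auto)
  qed
  have right: "(?h has_real_derivative g' t) (at t within {t0..<c})" if "t0 \<le> t"
  proof -
    have "(g has_real_derivative g' t) (at t within {t0..<c})" using g[of t] t that by auto
    then show ?thesis
      unfolding has_real_derivative_iff_has_vector_derivative
      by (rule has_vector_derivative_transform[rotated 2]) (use t that agree in auto)
  qed
  consider "t < t0" | "t = t0" | "t0 < t" by linarith
  then show ?thesis
  proof cases
    case 1
    have "at t within {a..t0} = at t within {a..<c}"
      by (rule at_within_nhd[where S="{..<t0}"]) (use 1 t0 in auto)
    then show ?thesis using left 1 by auto
  next
    case 2
    have "{a..<c} = {a..t0} \<union> {t0..<c}" using t0 by auto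
    then show ?thesis using left right 2 agree
      unfolding has_field_derivative_iff by (auto simp: Lim_within_Un)
  next
    case 3
    have "at t within {t0..<c} = at t within {a..<c}"
      by (rule at_within_nhd[where S="{t0<..}"]) (use 3 t0 in auto)
    then show ?thesis using right 3 by auto
  qed
qed

lemma barrier_le:
  fixes f :: "real \<Rightarrow> real"
  assumes ab: "a \<le> b" and fa: "f a \<le> m" and cont: "continuous_on {a..b} f"
    and deriv: "\<And>x. a < x \<Longrightarrow> x < b \<Longrightarrow> m < f x \<Longrightarrow>
      \<exists>D. (f has_real_derivative D) (at x) \<and> D \<le> 0"
  shows "f b \<le> m"
proof (rule ccontr)
  assume fb: "\<not> f b \<le> m"
  define S where "S = {a..b} \<inter> f -` {..m}"
  have "closed S" unfolding S_def by (rule continuous_closed_preimage[OF cont]) auto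
  moreover have "a \<in> S" "bdd_above S" using ab fa by (auto simp: S_def)
  ultimately have s0: "Sup S \<in> S" using closed_contains_Sup by blast
  then have "Sup S < b" using fb by (auto simp: S_def less_le)
  have above: "m < f x" if "Sup S < x" "x \<le> b" for x
    using that cSup_upper[of x S] \<open>bdd_above S\<close> s0 by (force simp: S_def)
  have "continuous_on {Sup S..b} f"
    using s0 by (intro continuous_on_subset[OF cont]) (auto simp: S_def)
  moreover have "f differentiable (at x)" if "Sup S < x" "x < b" for x
    using deriv[of x] that s0 above[of x] by (auto simp: S_def real_differentiable_def)
  ultimately obtain z l where
    z: "Sup S < z" "z < b" "DERIV f z :> l" "f b - f (Sup S) = (b - Sup S) * l"
    using MVT[OF \<open>Sup S < b\<close>] by blast
  obtain D where D: "(f has_real_derivative D) (at z)" "D \<le> 0"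
    using deriv[of z] z above[of z] s0 by (auto simp: S_def)
  have "f b \<le> f (Sup S)"
    using z(4) DERIV_unique[OF z(3) D(1)] D(2) \<open>Sup S < b\<close> mult_nonneg_nonpos[of "b - Sup S" D]
    by simp
  then show False using s0 fb by (auto simp: S_def)
qed

text \<open>The solutions of \<open>y' = -y\<^sup>2 - s\<^sup>2\<close> are \<open>s tan (c - s t)\<close>, so a supersolution loses at
  most \<open>s\<close> per unit time in \<open>arctan (y / s)\<close>.\<close>

lemma riccati_arctan_lower_bound:
  fixes f :: "real \<Rightarrow> real"
  assumes s: "0 < s" and ab: "a \<le> b" and cont: "continuous_on {a..b} f"
    and deriv: "\<And>x. a < x \<Longrightarrow> x < b \<Longrightarrow>
                  \<exists>D. (f has_real_derivative D) (at x) \<and> - (f x)\<^sup>2 - s\<^sup>2 \<le> D"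
  shows "arctan (f a / s) - s * (b - a) \<le> arctan (f b / s)"
proof -
  let ?g = "\<lambda>x. - (arctan (f x / s) + s * x)"
  have "?g b \<le> ?g a"
  proof (rule barrier_le[OF ab])
    show "continuous_on {a..b} ?g" using s by (intro continuous_intros cont) auto
    fix x assume x: "a < x" "x < b"
    obtain D where D: "(f has_real_derivative D) (at x)" "- (f x)\<^sup>2 - s\<^sup>2 \<le> D"
      using deriv[OF x] by blast
    define w where "w = 1 + (f x / s)\<^sup>2"
    have w: "0 < w" unfolding w_def by (simp add: add_pos_nonneg)
    have "((\<lambda>x. arctan (f x / s)) has_real_derivative inverse w * (D / s)) (at x)"
      unfolding w_def by (rule DERIV_chain2[OF DERIV_arctan DERIV_cdivide[OF D(1)]])
    then have "(?g has_real_derivative - (inverse w * (D / s) + s * 1)) (at x)"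
      by (intro DERIV_minus DERIV_add DERIV_cmult DERIV_ident)
    moreover have "- s * w = (- (f x)\<^sup>2 - s\<^sup>2) / s"
      using s by (simp add: w_def field_simps power2_eq_square)
    then have "- s * w \<le> D / s"
      using D(2) s by (simp add: divide_right_mono)
    then have "- s \<le> (D / s) / w"
      using pos_le_divide_eq[OF w] by blast
    then have "- (inverse w * (D / s) + s * 1) \<le> 0"
      by (simp add: divide_inverse mult.commute)
    ultimately show "\<exists>D. (?g has_real_derivative D) (at x) \<and> D \<le> 0" by blast
  qed simp
  then show ?thesis by (simp add: algebra_simps)
qed

text \<open>Two solutions \<open>f < g\<close> of the same Riccati equation \<open>y' = -y\<^sup>2 + q\<close>: once \<open>f\<^sup>2 > 2K\<close>
  with \<open>q \<ge> -K\<close>, the ratio \<open>f / (g - f)\<close> has derivative \<open>(f g + q) / (g - f) \<ge> 0\<close> whenever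
  it is below \<open>-2\<close>.\<close>

lemma riccati_ratio_lower_bound:
  fixes f g q :: "real \<Rightarrow> real"
  assumes ab: "a \<le> b" and cont: "continuous_on {a..b} f" "continuous_on {a..b} g"
    and f: "\<And>x. a < x \<Longrightarrow> x < b \<Longrightarrow> (f has_real_derivative - (f x)\<^sup>2 + q x) (at x)"
    and g: "\<And>x. a < x \<Longrightarrow> x < b \<Longrightarrow> (g has_real_derivative - (g x)\<^sup>2 + q x) (at x)"
    and less: "\<And>x. x \<in> {a..b} \<Longrightarrow> f x < g x"
    and large: "\<And>x. a < x \<Longrightarrow> x < b \<Longrightarrow> 2 * K < (f x)\<^sup>2"
    and q: "\<And>x. a < x \<Longrightarrow> x < b \<Longrightarrow> - K \<le> q x"
  shows "min (f a / (g a - f a)) (-2) \<le> f b / (g b - f b)"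
proof -
  let ?r = "\<lambda>x. - (f x / (g x - f x))"
  have "?r b \<le> - min (f a / (g a - f a)) (-2)"
  proof (rule barrier_le[OF ab])
    show "continuous_on {a..b} ?r"
      using less by (intro continuous_intros cont) force
    fix x assume x: "a < x" "x < b" and below: "- min (f a / (g a - f a)) (-2) < ?r x"
    define d where "d = g x - f x"
    have d: "0 < d" using less[of x] x by (simp add: d_def)
    have "f x < -2 * d" using below d by (simp add: d_def field_simps)
    then have "f x * (- f x / 2) \<le> f x * d"
      using d by (intro mult_left_mono_neg) auto
    then have pos: "0 \<le> f x * g x + q x"
      using large[OF x] q[OF x] by (simp add: d_def algebra_simps power2_eq_square)
    have "g x - f x \<noteq> 0" using d by (simp add: d_def)
    have num: "(- (f x)\<^sup>2 + q x) * (g x - f x)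
          - f x * ((- (g x)\<^sup>2 + q x) - (- (f x)\<^sup>2 + q x))
        = (g x - f x) * (f x * g x + q x)"
      by (simp add: algebra_simps power2_eq_square)
    note quotient = DERIV_divide[OF f[OF x] DERIV_diff[OF g[OF x] f[OF x]] \<open>g x - f x \<noteq> 0\<close>]
    from DERIV_minus[OF quotient]
    have "(?r has_real_derivative - ((f x * g x + q x) / d)) (at x)"
      by (rule DERIV_cong) (use \<open>g x - f x \<noteq> 0\<close> in \<open>simp only: num, simp add: d_def\<close>)
    moreover have "- ((f x * g x + q x) / d) \<le> 0" using pos d by simp
    ultimately show "\<exists>D. (?r has_real_derivative D) (at x) \<and> D \<le> 0" by blast
  qed (simp add: min_def)
  then show ?thesis by simp
qed

section \<open>The system as an ODE on bounded sequences\<close>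

lemma has_real_derivative_apply_bcontfun:
  fixes Y :: "real \<Rightarrow> ('a::metric_space \<Rightarrow>\<^sub>C real)"
  assumes "(Y has_vector_derivative D) F"
  shows "((\<lambda>t. Y t x) has_real_derivative D x) F"
proof -
  have "\<bar>X x\<bar> \<le> norm X" for X :: "'a \<Rightarrow>\<^sub>C real"
    using norm_bounded[of X x] by simp
  then have "bounded_linear (\<lambda>X :: 'a \<Rightarrow>\<^sub>C real. X x)"
    by (intro bounded_linear_intro[where K=1]) auto
  from bounded_linear.has_derivative[OF this assms[unfolded has_vector_derivative_def]]
  show ?thesis
    by (simp add: has_real_derivative_iff_has_vector_derivative has_vector_derivative_def)
qed

lemma abs_sum_le_card_mult:
  fixes f :: "'a \<Rightarrow> real"
  assumes "\<And>i. i \<in> A \<Longrightarrow> \<bar>f i\<bar> \<le> K"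
  shows "\<bar>sum f A\<bar> \<le> real (card A) * K"
  using order_trans[OF sum_abs sum_bounded_above[of A "\<lambda>i. \<bar>f i\<bar>" K]] assms by simp

definition vec_upto :: "nat \<Rightarrow> (nat \<Rightarrow> real) \<Rightarrow> nat \<Rightarrow>\<^sub>C real" where
  "vec_upto n f = Bcontfun (\<lambda>i. if i \<le> n then f i else 0)"

lemma vec_upto_apply [simp]: "vec_upto n f i = (if i \<le> n then f i else 0)"
proof -
  have "(\<lambda>i. if i \<le> n then f i else 0) \<in> bcontfun"
  proof (rule bcontfun_normI)
    show "norm (if i \<le> n then f i else 0) \<le> (\<Sum>i\<le>n. \<bar>f i\<bar>)" for i
      using member_le_sum[of i "{..n}" "\<lambda>i. \<bar>f i\<bar>"] by (auto intro: sum_nonneg)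
  qed simp
  then show ?thesis by (simp add: vec_upto_def Bcontfun_inverse)
qed

definition system_field :: "nat \<Rightarrow> real \<Rightarrow> real \<Rightarrow> (nat \<Rightarrow>\<^sub>C real) \<Rightarrow> nat \<Rightarrow>\<^sub>C real" where
  "system_field n k cb X = vec_upto n (\<lambda>i. if i = 0 then - X 0 * (\<Sum>l=1..n. X l)
                                          else - (X i)\<^sup>2 + k / real n * (X 0 - cb))"

definition system_state :: "nat \<Rightarrow> (nat \<Rightarrow> real \<Rightarrow> real) \<Rightarrow> (real \<Rightarrow> real) \<Rightarrow> real \<Rightarrow> nat \<Rightarrow>\<^sub>C real"
  where "system_state n lam rho t = vec_upto n (\<lambda>i. if i = 0 then rho t else lam i t)"

lemma abs_mult_diff_le:
  fixes a b c e :: real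
  shows "\<bar>a * b - c * e\<bar> \<le> \<bar>a - c\<bar> * \<bar>e\<bar> + \<bar>a\<bar> * \<bar>b - e\<bar>"
proof -
  have "a * b - c * e = (a - c) * e + a * (b - e)" by (simp add: algebra_simps)
  then show ?thesis by (metis abs_mult abs_triangle_ineq)
qed

lemma system_field_rho_component_lipschitz:
  assumes X: "norm X \<le> R" and Y: "norm Y \<le> R"
  shows "\<bar>system_field n k cb X 0 - system_field n k cb Y 0\<bar> \<le> 2 * real n * R * norm (X - Y)"
proof -
  define d where "d = norm (X - Y)"
  have d: "0 \<le> d" and dXY: "\<bar>X l - Y l\<bar> \<le> d" for l
    using norm_bounded[of "X - Y" l] by (simp_all add: d_def)
  have xR: "\<bar>X l\<bar> \<le> R" and yR: "\<bar>Y l\<bar> \<le> R" for l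
    using norm_bounded[of X l] norm_bounded[of Y l] X Y by simp_all
  have R: "0 \<le> R" using xR[of 0] by linarith
  have sY: "\<bar>\<Sum>l=1..n. Y l\<bar> \<le> real n * R"
    using abs_sum_le_card_mult[of "{1..n}" Y R] yR by simp
  have sXY: "\<bar>(\<Sum>l=1..n. X l) - (\<Sum>l=1..n. Y l)\<bar> \<le> real n * d"
    using abs_sum_le_card_mult[of "{1..n}" "\<lambda>l. X l - Y l" d] dXY by (simp add: sum_subtractf)
  have "\<bar>system_field n k cb X 0 - system_field n k cb Y 0\<bar>
      = \<bar>X 0 * (\<Sum>l=1..n. X l) - Y 0 * (\<Sum>l=1..n. Y l)\<bar>"
    by (simp add: system_field_def abs_minus_commute)
  also have "\<dots> \<le> \<bar>X 0 - Y 0\<bar> * \<bar>\<Sum>l=1..n. Y l\<bar> + \<bar>X 0\<bar> * \<bar>(\<Sum>l=1..n. X l) - (\<Sum>l=1..n. Y l)\<bar>"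
    by (rule abs_mult_diff_le)
  also have "\<dots> \<le> d * (real n * R) + R * (real n * d)"
    using d R by (intro add_mono mult_mono dXY sY xR sXY) auto
  also have "\<dots> = 2 * real n * R * norm (X - Y)"
    by (simp add: d_def algebra_simps)
  finally show ?thesis .
qed

lemma system_field_lam_component_lipschitz:
  assumes X: "norm X \<le> R" and Y: "norm Y \<le> R" and i: "i \<noteq> 0" "i \<le> n"
  shows "\<bar>system_field n k cb X i - system_field n k cb Y i\<bar>
           \<le> (2 * R + \<bar>k\<bar> / real n) * norm (X - Y)"
proof -
  define d where "d = norm (X - Y)"
  have d: "0 \<le> d" and dXY: "\<bar>X l - Y l\<bar> \<le> d" for l
    using norm_bounded[of "X - Y" l] by (simp_all add: d_def)
  have xR: "\<bar>X l\<bar> \<le> R" and yR: "\<bar>Y l\<bar> \<le> R" for l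
    using norm_bounded[of X l] norm_bounded[of Y l] X Y by simp_all
  have "\<bar>system_field n k cb X i - system_field n k cb Y i\<bar>
      = \<bar>(Y i - X i) * (Y i + X i) + k / real n * (X 0 - Y 0)\<bar>"
    using i by (simp add: system_field_def power2_eq_square algebra_simps)
  also have "\<dots> \<le> \<bar>Y i - X i\<bar> * \<bar>Y i + X i\<bar> + \<bar>k\<bar> / real n * \<bar>X 0 - Y 0\<bar>"
    using abs_triangle_ineq[of "(Y i - X i) * (Y i + X i)" "k / real n * (X 0 - Y 0)"]
    by (simp add: abs_mult)
  also have "\<dots> \<le> d * (2 * R) + \<bar>k\<bar> / real n * d"
  proof (intro add_mono mult_mono mult_left_mono)
    show "\<bar>Y i + X i\<bar> \<le> 2 * R"
      using abs_triangle_ineq[of "Y i" "X i"] xR[of i] yR[of i] by linarith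
  qed (use dXY[of i] dXY[of 0] d in \<open>auto simp: abs_minus_commute\<close>)
  also have "\<dots> = (2 * R + \<bar>k\<bar> / real n) * norm (X - Y)"
    by (simp add: d_def algebra_simps)
  finally show ?thesis .
qed

lemma system_field_lipschitz:
  assumes X: "norm X \<le> R" and Y: "norm Y \<le> R"
  shows "norm (system_field n k cb X - system_field n k cb Y)
           \<le> (2 * real n * R + 2 * R + \<bar>k\<bar> / real n) * norm (X - Y)"
proof (rule norm_bound)
  fix i
  have "0 \<le> R" using X norm_ge_zero order_trans by blast
  then have nonneg: "0 \<le> 2 * real n * R * norm (X - Y)" "0 \<le> (2 * R + \<bar>k\<bar> / real n) * norm (X - Y)"
    by simp_all
  have "\<bar>system_field n k cb X i - system_field n k cb Y i\<bar>
      \<le> 2 * real n * R * norm (X - Y) + (2 * R + \<bar>k\<bar> / real n) * norm (X - Y)"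
  proof (cases "i = 0")
    case True
    show ?thesis
      unfolding True using system_field_rho_component_lipschitz[OF X Y, of n k cb] nonneg
      by linarith
  next
    case False
    show ?thesis
    proof (cases "i \<le> n")
      case True
      then show ?thesis
        using system_field_lam_component_lipschitz[OF X Y False True, where k=k and cb=cb] nonneg
        by linarith
    next
      case False
      then show ?thesis using nonneg by (simp add: system_field_def)
    qed
  qed
  moreover have "(2 * real n * R + 2 * R + \<bar>k\<bar> / real n) * norm (X - Y)
      = 2 * real n * R * norm (X - Y) + (2 * R + \<bar>k\<bar> / real n) * norm (X - Y)"
    by (simp add: algebra_simps)
  ultimately show "norm ((system_field n k cb X - system_field n k cb Y) i)
      \<le> (2 * real n * R + 2 * R + \<bar>k\<bar> / real n) * norm (X - Y)"
    by simp
qed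

lemma system_field_bounded:
  assumes X: "norm X \<le> R"
  shows "norm (system_field n k cb X) \<le> real n * R\<^sup>2 + R\<^sup>2 + \<bar>k\<bar> / real n * (R + \<bar>cb\<bar>)"
proof (rule norm_bound)
  fix i
  have xR: "\<bar>X l\<bar> \<le> R" for l using norm_bounded[of X l] X by simp
  have R: "0 \<le> R" using xR[of 0] by linarith
  have "\<bar>X 0 * (\<Sum>l=1..n. X l)\<bar> \<le> R * (real n * R)"
    unfolding abs_mult using abs_sum_le_card_mult[of "{1..n}" X R] xR R by (intro mult_mono) auto
  moreover have "\<bar>- (X i)\<^sup>2 + k / real n * (X 0 - cb)\<bar> \<le> R\<^sup>2 + \<bar>k\<bar> / real n * (R + \<bar>cb\<bar>)"
  proof -
    have "\<bar>k / real n * (X 0 - cb)\<bar> = \<bar>k\<bar> / real n * \<bar>X 0 - cb\<bar>"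
      by (simp add: abs_mult)
    also have "\<dots> \<le> \<bar>k\<bar> / real n * (R + \<bar>cb\<bar>)"
      using xR[of 0] by (intro mult_left_mono) auto
    finally have "\<bar>k / real n * (X 0 - cb)\<bar> \<le> \<bar>k\<bar> / real n * (R + \<bar>cb\<bar>)" .
    moreover have "\<bar>(X i)\<^sup>2\<bar> \<le> R\<^sup>2" using power_mono[OF xR[of i] abs_ge_zero, of 2] by simp
    ultimately show ?thesis
      using abs_triangle_ineq[of "- (X i)\<^sup>2" "k / real n * (X 0 - cb)"] by simp
  qed
  ultimately show "norm (system_field n k cb X i) \<le> real n * R\<^sup>2 + R\<^sup>2 + \<bar>k\<bar> / real n * (R + \<bar>cb\<bar>)"
    using R by (auto simp: system_field_def power2_eq_square algebra_simps)
qed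

lemma system_local_solution:
  obtains h where "0 < h"
    "\<And>t0 X0. norm X0 \<le> B \<Longrightarrow> \<exists>Y. Y t0 = X0 \<and> (\<forall>t\<in>{t0..t0+h}.
       (Y has_vector_derivative system_field n k cb (Y t)) (at t within {t0..t0+h}))"
proof -
  define R where "R = \<bar>B\<bar> + 1"
  define L where "L = 2 * real n * R + 2 * R + \<bar>k\<bar> / real n"
  define M where "M = real n * R\<^sup>2 + R\<^sup>2 + \<bar>k\<bar> / real n * (R + \<bar>cb\<bar>)"
  define h where "h = min (1 / (M + 1)) (1 / (2 * (L + 1)))"
  have L: "0 \<le> L" and M: "0 \<le> M" by (simp_all add: L_def M_def R_def)
  have h: "0 < h" "h * M \<le> 1" "h * L \<le> 1/2"
    using L M by (auto simp: h_def min_def field_simps)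
  have "\<exists>Y. Y t0 = X0 \<and> (\<forall>t\<in>{t0..t0+h}.
      (Y has_vector_derivative system_field n k cb (Y t)) (at t within {t0..t0+h}))"
    if X0: "norm X0 \<le> B" for t0 X0
  proof -
    have ball: "norm X \<le> R" if "X \<in> cball X0 1" for X
      using that X0 norm_triangle_sub[of X X0] by (auto simp: R_def dist_norm norm_minus_commute)
    interpret picard_iteration "system_field n k cb" X0 1 h L M t0
      using h L ball system_field_lipschitz system_field_bounded
      by unfold_locales (auto simp: L_def M_def)
    show ?thesis using local_solution by blast
  qed
  with h show ?thesis using that by blast
qed

lemma is_solution_component_derivatives:
  assumes sol: "is_solution n k cb rho0 lam0 T lam rho" and i: "i \<le> n" and t: "t \<in> {0..<T}"
  shows "((\<lambda>t. system_state n lam rho t i) has_real_derivative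
           system_field n k cb (system_state n lam rho t) i) (at t within {0..<T})"
proof (cases "i = 0")
  case True
  have "(\<Sum>l=1..n. system_state n lam rho t l) = (\<Sum>l=1..n. lam l t)"
    by (intro sum.cong) (auto simp: system_state_def)
  then show ?thesis
    using sol t True by (simp add: is_solution_def system_state_def system_field_def)
next
  case False
  then show ?thesis
    using sol t i by (simp add: is_solution_def system_state_def system_field_def)
qed

lemma is_solution_of_component_derivatives:
  assumes T: "0 < T"
    and init: "X 0 = vec_upto n (\<lambda>i. if i = 0 then rho0 else lam0 i)"
    and deriv: "\<And>i t. i \<le> n \<Longrightarrow> t \<in> {0..<T} \<Longrightarrow>
      ((\<lambda>t. X t i) has_real_derivative system_field n k cb (X t) i) (at t within {0..<T})"
  shows "is_solution n k cb rho0 lam0 T (\<lambda>i t. X t i) (\<lambda>t. X t 0)"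
proof -
  have rho: "((\<lambda>t. X t 0) has_real_derivative - X t 0 * (\<Sum>l=1..n. X t l)) (at t within {0..<T})"
    if "t \<in> {0..<T}" for t
    using deriv[of 0 t] that by (simp add: system_field_def)
  have lam: "((\<lambda>t. X t i) has_real_derivative - (X t i)\<^sup>2 + k / real n * (X t 0 - cb))
               (at t within {0..<T})" if "t \<in> {0..<T}" "i \<in> {1..n}" for t i
    using deriv[of i t] that by (simp add: system_field_def)
  show ?thesis
    unfolding is_solution_def
  proof (intro conjI ballI)
    show "continuous_on {0..<T} (\<lambda>t. X t 0)" by (rule DERIV_continuous_on[OF rho])
    show "continuous_on {0..<T} (\<lambda>t. X t i)" if "i \<in> {1..n}" for i
      using lam that by (intro DERIV_continuous_on) auto
  qed (use T init rho lam in auto)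
qed

lemma is_solution_extends_if_bounded:
  assumes sol: "is_solution n k cb rho0 lam0 T lam rho"
    and bounded: "\<And>t. t \<in> {0..<T} \<Longrightarrow> \<bar>rho t\<bar> \<le> B"
      "\<And>t i. t \<in> {0..<T} \<Longrightarrow> i \<in> {1..n} \<Longrightarrow> \<bar>lam i t\<bar> \<le> B"
  shows "\<exists>T'>T. \<exists>lam' rho'. is_solution n k cb rho0 lam0 T' lam' rho'"
proof -
  let ?S = "system_state n lam rho" and ?F = "system_field n k cb"
  have T: "0 < T" using sol by (simp add: is_solution_def)
  have B: "norm (?S t) \<le> B" if "t \<in> {0..<T}" for t
    using bounded[OF that] bounded(1)[OF that] by (intro norm_bound) (auto simp: system_state_def)
  obtain h where h: "0 < h" and local: "\<And>t0 X0. norm X0 \<le> B \<Longrightarrow> \<exists>Y. Y t0 = X0 \<and>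
       (\<forall>t\<in>{t0..t0+h}. (Y has_vector_derivative ?F (Y t)) (at t within {t0..t0+h}))"
    using system_local_solution by blast
  define t0 where "t0 = max 0 (T - h/2)"
  have t0: "0 \<le> t0" "t0 < T" "T < t0 + h" using h T by (auto simp: t0_def)
  obtain Y where Y0: "Y t0 = ?S t0"
    and Y: "\<And>t. t \<in> {t0..t0+h} \<Longrightarrow> (Y has_vector_derivative ?F (Y t)) (at t within {t0..t0+h})"
    using local[of "system_state n lam rho t0" t0] B[of t0] t0 by auto
  define X where "X t = (if t \<le> t0 then ?S t else Y t)" for t
  have "is_solution n k cb rho0 lam0 (t0 + h) (\<lambda>i t. X t i) (\<lambda>t. X t 0)"
  proof (rule is_solution_of_component_derivatives)
    show "X 0 = vec_upto n (\<lambda>i. if i = 0 then rho0 else lam0 i)"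
      using sol t0 by (intro bcontfun_eqI) (auto simp: X_def system_state_def is_solution_def)
    fix i t assume i: "i \<le> n" and t: "t \<in> {0..<t0 + h}"
    have "((\<lambda>t. if t \<le> t0 then ?S t i else Y t i) has_real_derivative
           (if t \<le> t0 then ?F (?S t) i else ?F (Y t) i)) (at t within {0..<t0 + h})"
    proof (rule has_real_derivative_glue[OF t0(1,2) _ _ _ _ _ t])
      show "((\<lambda>t. ?S t i) has_real_derivative ?F (?S t) i) (at t within {0..<T})"
        if "t \<in> {0..<T}" for t
        by (rule is_solution_component_derivatives[OF sol i that])
      show "((\<lambda>t. Y t i) has_real_derivative ?F (Y t) i) (at t within {t0..<t0 + h})"
        if "t \<in> {t0..<t0 + h}" for t
        using Y[of t] that
        by (intro has_real_derivative_apply_bcontfun)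
          (auto intro: has_vector_derivative_within_subset)
    qed (use h Y0 in auto)
    moreover have "(\<lambda>t. X t i) = (\<lambda>t. if t \<le> t0 then ?S t i else Y t i)"
      by (simp add: X_def fun_eq_iff)
    moreover have "?F (X t) i = (if t \<le> t0 then ?F (?S t) i else ?F (Y t) i)"
      by (simp add: X_def)
    ultimately show "((\<lambda>t. X t i) has_real_derivative ?F (X t) i) (at t within {0..<t0 + h})"
      by (simp only:)
  qed (use t0 in linarith)
  then show ?thesis using t0 by blast
qed

section \<open>Solutions and their conserved quantities\<close>

definition exp_primitive :: "(real \<Rightarrow> real) \<Rightarrow> real \<Rightarrow> real" where
  "exp_primitive f t = exp (integral {0..t} f)"

lemma exp_primitive_pos: "0 < exp_primitive f t"
  by (simp add: exp_primitive_def)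

lemma exp_primitive_0 [simp]: "exp_primitive f 0 = 1"
  by (simp add: exp_primitive_def)

locale riccati_solution =
  fixes n :: nat and k cb rho0 :: real and lam0 :: "nat \<Rightarrow> real" and T :: real
    and lam :: "nat \<Rightarrow> real \<Rightarrow> real" and rho :: "real \<Rightarrow> real"
  assumes solution: "is_solution n k cb rho0 lam0 T lam rho"
    and n: "1 \<le> n" and k: "0 \<le> k" and cb: "0 \<le> cb" and rho0: "0 < rho0"
begin

lemma T_pos: "0 < T"
  and rho_0: "rho 0 = rho0"
  and lam_0: "i \<in> {1..n} \<Longrightarrow> lam i 0 = lam0 i"
  and lam_continuous: "i \<in> {1..n} \<Longrightarrow> continuous_on {0..<T} (lam i)"
  and lam_deriv: "i \<in> {1..n} \<Longrightarrow> t \<in> {0..<T} \<Longrightarrow>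
      (lam i has_real_derivative - (lam i t)\<^sup>2 + k / real n * (rho t - cb)) (at t within {0..<T})"
  and rho_deriv: "t \<in> {0..<T} \<Longrightarrow>
      (rho has_real_derivative - rho t * (\<Sum>i=1..n. lam i t)) (at t within {0..<T})"
  using solution by (auto simp: is_solution_def)

lemma one_index: "1 \<in> {1..n}"
  using n by simp

lemma lam_deriv_interior:
  "i \<in> {1..n} \<Longrightarrow> 0 < t \<Longrightarrow> t < T \<Longrightarrow>
     (lam i has_real_derivative - (lam i t)\<^sup>2 + k / real n * (rho t - cb)) (at t)"
  by (rule has_real_derivative_at_interior_Ico[OF _ _ lam_deriv]) auto

lemma lam_continuous_Icc: "i \<in> {1..n} \<Longrightarrow> 0 \<le> a \<Longrightarrow> b < T \<Longrightarrow> continuous_on {a..b} (lam i)"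
  by (rule continuous_on_subset[OF lam_continuous]) auto

lemma integral_lam_deriv:
  "i \<in> {1..n} \<Longrightarrow> t \<in> {0..<T} \<Longrightarrow>
     ((\<lambda>t. integral {0..t} (lam i)) has_real_derivative lam i t) (at t within {0..<T})"
  by (rule integral_has_real_derivative_Ico[OF lam_continuous])

lemma exp_primitive_deriv:
  assumes "i \<in> {1..n}" "t \<in> {0..<T}"
  shows "(exp_primitive (lam i) has_real_derivative lam i t * exp_primitive (lam i) t)
           (at t within {0..<T})"
  unfolding exp_primitive_def[abs_def]
  using DERIV_chain2[OF DERIV_exp integral_lam_deriv[OF assms]] by (simp add: mult.commute)

lemma rho_conserved:
  assumes t: "t \<in> {0..<T}"
  shows "rho t * exp (\<Sum>i=1..n. integral {0..t} (lam i)) = rho0"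
proof -
  let ?f = "\<lambda>t. rho t * exp (\<Sum>i=1..n. integral {0..t} (lam i))"
  have "(?f has_real_derivative 0) (at t within {0..<T})" if t: "t \<in> {0..<T}" for t
  proof -
    have "((\<lambda>t. \<Sum>i=1..n. integral {0..t} (lam i)) has_real_derivative (\<Sum>i=1..n. lam i t))
        (at t within {0..<T})"
      using integral_lam_deriv t by (intro DERIV_sum) auto
    from DERIV_mult[OF rho_deriv[OF t] DERIV_chain2[OF DERIV_exp this]]
    show ?thesis by (rule DERIV_cong) (simp add: algebra_simps)
  qed
  from has_real_derivative_zero_Ico_constant[OF this t] show ?thesis
    by (simp add: rho_0)
qed

lemma rho_pos: "t \<in> {0..<T} \<Longrightarrow> 0 < rho t"
  using rho_conserved[of t] rho0 by (metis exp_gt_zero zero_less_mult_pos2)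

lemma forcing_lower_bound:
  assumes "t \<in> {0..<T}"
  shows "- (k * cb / real n) \<le> k / real n * (rho t - cb)"
proof -
  have "0 \<le> k / real n * rho t" using rho_pos[OF assms] k by simp
  then show ?thesis by (simp add: right_diff_distrib)
qed

text \<open>The gaps \<open>\<lambda>\<^sub>i - \<lambda>\<^sub>j\<close> satisfy \<open>(\<lambda>\<^sub>i - \<lambda>\<^sub>j)' = -(\<lambda>\<^sub>i + \<lambda>\<^sub>j)(\<lambda>\<^sub>i - \<lambda>\<^sub>j)\<close>,
  which the factor \<open>u\<^sub>i u\<^sub>j\<close> integrates.\<close>

lemma gap_conserved:
  assumes i: "i \<in> {1..n}" and j: "j \<in> {1..n}" and t: "t \<in> {0..<T}"
  shows "(lam i t - lam j t) * (exp_primitive (lam i) t * exp_primitive (lam j) t)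
           = lam0 i - lam0 j"
proof -
  let ?f = "\<lambda>t. (lam i t - lam j t) * (exp_primitive (lam i) t * exp_primitive (lam j) t)"
  have "(?f has_real_derivative 0) (at t within {0..<T})" if t: "t \<in> {0..<T}" for t
    using DERIV_mult[OF DERIV_diff[OF lam_deriv[OF i t] lam_deriv[OF j t]]
        DERIV_mult[OF exp_primitive_deriv[OF i t] exp_primitive_deriv[OF j t]]]
    by (rule DERIV_cong) (simp add: algebra_simps power2_eq_square)
  from has_real_derivative_zero_Ico_constant[OF this t] show ?thesis
    by (simp add: lam_0[OF i] lam_0[OF j])
qed

lemma lam_le_if_init_le:
  assumes "i \<in> {1..n}" "j \<in> {1..n}" "t \<in> {0..<T}" "lam0 j \<le> lam0 i"
  shows "lam j t \<le> lam i t"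
  using gap_conserved[OF assms(1-3)] assms(4)
    mult_pos_pos[OF exp_primitive_pos exp_primitive_pos, of "lam i" t "lam j" t]
  by (smt (verit) mult_neg_pos)

lemma lam_less_if_init_less:
  assumes "i \<in> {1..n}" "j \<in> {1..n}" "t \<in> {0..<T}" "lam0 j < lam0 i"
  shows "lam j t < lam i t"
  using gap_conserved[OF assms(1-3)] assms(4)
    mult_pos_pos[OF exp_primitive_pos exp_primitive_pos, of "lam i" t "lam j" t]
  by (smt (verit) mult_nonpos_nonneg)

lemma lam_bounded_below_Icc:
  assumes "i \<in> {1..n}" "b < T"
  obtains m where "\<And>t. t \<in> {0..b} \<Longrightarrow> m \<le> lam i t"
proof (cases "0 \<le> b")
  case True
  then obtain t where "\<forall>y\<in>{0..b}. lam i t \<le> lam i y"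
    using continuous_attains_inf[OF compact_Icc _
        lam_continuous_Icc[OF assms(1) order_refl assms(2)]] by auto
  then show ?thesis using that by blast
qed (use that in auto)

lemma rho_upper_bound:
  assumes A: "0 \<le> A" and lower: "\<And>i t. i \<in> {1..n} \<Longrightarrow> t \<in> {0..<T} \<Longrightarrow> - A \<le> lam i t"
    and t: "t \<in> {0..<T}"
  shows "rho t \<le> rho0 * exp (real n * A * T)"
proof -
  have "- (A * T) \<le> integral {0..t} (lam i)" if i: "i \<in> {1..n}" for i
  proof -
    have "integral {0..t} (\<lambda>_. - A) \<le> integral {0..t} (lam i)"
      using t lower[OF i] lam_continuous_Icc[OF i order_refl, of t]
      by (intro integral_le integrable_continuous_real) auto
    moreover have "A * t \<le> A * T" using t A by (intro mult_left_mono) auto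
    ultimately show ?thesis using t by (simp add: mult.commute)
  qed
  then have "(\<Sum>i=1..n. - (A * T)) \<le> (\<Sum>i=1..n. integral {0..t} (lam i))"
    by (intro sum_mono)
  then have "exp (- (\<Sum>i=1..n. integral {0..t} (lam i))) \<le> exp (real n * A * T)"
    by (simp add: algebra_simps)
  moreover have "rho t = rho0 * exp (- (\<Sum>i=1..n. integral {0..t} (lam i)))"
    using rho_conserved[OF t] by (simp add: exp_minus field_simps)
  ultimately show ?thesis using rho0 by simp
qed

lemma lam_upper_bound:
  assumes rho_le: "\<And>t. t \<in> {0..<T} \<Longrightarrow> rho t \<le> R" and i: "i \<in> {1..n}" and t: "t \<in> {0..<T}"
  shows "lam i t \<le> max (lam0 i) (sqrt (k / real n * R))"
proof (rule barrier_le[where f="lam i"])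
  show "lam i 0 \<le> max (lam0 i) (sqrt (k / real n * R))" using lam_0[OF i] by simp
  show "continuous_on {0..t} (lam i)" using t by (intro lam_continuous_Icc[OF i]) auto
  have C: "0 \<le> k / real n * R" using rho_pos[of 0] rho_le[of 0] T_pos k by simp
  fix x assume x: "0 < x" "x < t" and above: "max (lam0 i) (sqrt (k / real n * R)) < lam i x"
  have xT: "x \<in> {0..<T}" using x t by auto
  have "(sqrt (k / real n * R))\<^sup>2 < (lam i x)\<^sup>2"
    using above C by (intro power_strict_mono) auto
  moreover have "k / real n * (rho x - cb) \<le> k / real n * R"
    using rho_le[OF xT] k cb by (intro mult_left_mono) auto
  ultimately have "- (lam i x)\<^sup>2 + k / real n * (rho x - cb) \<le> 0"
    using C by simp
  then show "\<exists>D. (lam i has_real_derivative D) (at x) \<and> D \<le> 0"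
    using lam_deriv_interior[OF i x(1)] x t by auto
qed (use t in auto)

lemma arctan_lam_lower_bound:
  assumes i: "i \<in> {1..n}" and s: "0 < s" "k * cb / real n \<le> s\<^sup>2"
    and t: "t1 \<le> t" "t < T" and t1: "0 \<le> t1"
  shows "arctan (lam i t1 / s) - s * (t - t1) \<le> arctan (lam i t / s)"
proof (rule riccati_arctan_lower_bound[OF s(1) t(1)])
  show "continuous_on {t1..t} (lam i)" using t t1 by (intro lam_continuous_Icc[OF i]) auto
  fix x assume "t1 < x" "x < t"
  then have x: "x \<in> {0..<T}" "0 < x" "x < T" using t t1 by auto
  show "\<exists>D. (lam i has_real_derivative D) (at x) \<and> - (lam i x)\<^sup>2 - s\<^sup>2 \<le> D"
  proof (intro exI conjI)
    show "(lam i has_real_derivative - (lam i x)\<^sup>2 + k / real n * (rho x - cb)) (at x)"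
      using lam_deriv_interior[OF i x(2,3)] .
    show "- (lam i x)\<^sup>2 - s\<^sup>2 \<le> - (lam i x)\<^sup>2 + k / real n * (rho x - cb)"
      using forcing_lower_bound[OF x(1)] s(2) by linarith
  qed
qed

lemma lam_bounded_below_near_T:
  assumes i: "i \<in> {1..n}" and t1: "0 \<le> t1" "t1 < T" and above: "Z \<le> lam i t1"
    and s: "0 < s" "k * cb / real n \<le> s\<^sup>2"
    and close: "s * (T - t1) < (arctan (Z / s) + pi/2) / 2"
  obtains m where "\<And>t. t1 \<le> t \<Longrightarrow> t < T \<Longrightarrow> m \<le> lam i t"
proof -
  define c where "c = arctan (Z / s) - (arctan (Z / s) + pi/2) / 2"
  have c: "- (pi/2) < c" "c < pi/2"
    using arctan_lbound[of "Z / s"] arctan_ubound[of "Z / s"] by (simp_all add: c_def field_simps)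
  have "s * tan c \<le> lam i t" if t: "t1 \<le> t" "t < T" for t
  proof -
    have "arctan (Z / s) \<le> arctan (lam i t1 / s)"
      unfolding arctan_le_iff using above s(1) by (intro divide_right_mono) auto
    moreover have "s * (t - t1) \<le> s * (T - t1)"
      using t s(1) by (intro mult_left_mono) auto
    moreover have "arctan (lam i t1 / s) - s * (t - t1) \<le> arctan (lam i t / s)"
      using arctan_lam_lower_bound[OF i s t t1(1)] .
    ultimately have "arctan (tan c) \<le> arctan (lam i t / s)"
      using close c_def unfolding arctan_tan[OF c] by linarith
    then have "tan c \<le> lam i t / s" by (simp only: arctan_le_iff)
    then show ?thesis using s(1) by (simp add: pos_le_divide_eq mult.commute)
  qed
  then show ?thesis using that by blast
qed

end

section \<open>Behaviour at the blow-up time\<close>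

locale maximal_riccati_solution = riccati_solution +
  assumes maximal: "\<not> (\<exists>T'>T. \<exists>lam' rho'. is_solution n k cb rho0 lam0 T' lam' rho')"
    and lam0_min: "\<And>i. i \<in> {1..n} \<Longrightarrow> lam0 1 \<le> lam0 i"
begin

text \<open>Since \<open>\<lambda>\<^sub>1\<close> is the smallest of the \<open>\<lambda>\<^sub>i\<close>, a lower bound on it bounds \<open>\<rho>\<close> and hence every
  \<open>\<lambda>\<^sub>i\<close> from above; a bounded solution would extend beyond \<open>T\<close>.\<close>

lemma lam1_unbounded_below: "\<not> (\<exists>m. \<forall>t\<in>{0..<T}. m \<le> lam 1 t)"
proof
  assume "\<exists>m. \<forall>t\<in>{0..<T}. m \<le> lam 1 t"
  then obtain m where m: "\<And>t. t \<in> {0..<T} \<Longrightarrow> m \<le> lam 1 t"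
    by blast
  define A where "A = max (- m) 0"
  have A: "0 \<le> A" and lam1: "\<And>t. t \<in> {0..<T} \<Longrightarrow> - A \<le> lam 1 t"
    using m by (force simp: A_def)+
  have lower: "- A \<le> lam i t" if "i \<in> {1..n}" "t \<in> {0..<T}" for i t
    using lam1[OF that(2)] lam_le_if_init_le[OF that(1) one_index that(2) lam0_min[OF that(1)]]
    by simp
  define Rr where "Rr = rho0 * exp (real n * A * T)"
  define C where "C = sqrt (k / real n * Rr)"
  define B where "B = Rr + A + C + (\<Sum>i=1..n. \<bar>lam0 i\<bar>)"
  have rho_le: "rho t \<le> Rr" if "t \<in> {0..<T}" for t
    unfolding Rr_def using rho_upper_bound[OF A lower that] .
  have nonneg: "0 \<le> C" "0 \<le> Rr" using rho0 k by (simp_all add: C_def Rr_def)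
  have sum: "\<bar>lam0 i\<bar> \<le> (\<Sum>i=1..n. \<bar>lam0 i\<bar>)" "0 \<le> (\<Sum>i=1..n. \<bar>lam0 i\<bar>)" if "i \<in> {1..n}" for i
    using member_le_sum[of i "{1..n}" "\<lambda>i. \<bar>lam0 i\<bar>"] that by (auto intro: sum_nonneg)
  have "\<exists>T'>T. \<exists>lam' rho'. is_solution n k cb rho0 lam0 T' lam' rho'"
  proof (rule is_solution_extends_if_bounded[OF solution, where B=B])
    show "\<bar>rho t\<bar> \<le> B" if "t \<in> {0..<T}" for t
      using rho_pos[OF that] rho_le[OF that] A nonneg sum[OF one_index] unfolding B_def by linarith
    show "\<bar>lam i t\<bar> \<le> B" if "t \<in> {0..<T}" "i \<in> {1..n}" for t i
      using lower[OF that(2,1)] lam_upper_bound[OF rho_le that(2,1)] A nonneg sum[OF that(2)]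
      unfolding B_def C_def[symmetric] by (simp add: abs_le_iff max_def split: if_splits)
  qed
  then show False using maximal by blast
qed

lemma lam1_tendsto_at_bot: "filterlim (lam 1) at_bot (at_left T)"
  unfolding filterlim_at_bot
proof (rule ccontr)
  assume "\<not> (\<forall>Z. eventually (\<lambda>t. lam 1 t \<le> Z) (at_left T))"
  then obtain Z where not_eventually: "\<not> eventually (\<lambda>t. lam 1 t \<le> Z) (at_left T)"
    by blast
  have frequent: "\<exists>t>b. t < T \<and> Z < lam 1 t" if "b < T" for b
  proof (rule ccontr)
    assume "\<not> (\<exists>t>b. t < T \<and> Z < lam 1 t)"
    then have "\<forall>t>b. t < T \<longrightarrow> lam 1 t \<le> Z" by (meson not_le)
    then have "eventually (\<lambda>t. lam 1 t \<le> Z) (at_left T)"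
      using eventually_at_left[OF T_pos] that by blast
    then show False using not_eventually by simp
  qed
  define s where "s = sqrt (k * cb / real n + 1)"
  have "0 \<le> k * cb / real n" using k cb by simp
  then have s: "0 < s" "k * cb / real n \<le> s\<^sup>2" by (simp_all add: s_def)
  define e where "e = (arctan (Z / s) + pi/2) / 2"
  have e: "0 < e" using arctan_lbound[of "Z / s"] by (simp add: e_def)
  obtain t1 where t1: "max 0 (T - e / s) < t1" "t1 < T" "Z < lam 1 t1"
    using frequent[of "max 0 (T - e / s)"] T_pos e s by auto
  have "T - t1 < e / s" using t1(1) by simp
  then have "s * (T - t1) < e" using pos_less_divide_eq[OF s(1)] by (simp add: mult.commute)
  then have close: "s * (T - t1) < (arctan (Z / s) + pi/2) / 2" by (simp only: e_def)
  have "0 \<le> t1" "Z \<le> lam 1 t1" using t1(1,3) by auto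
  then obtain m1 where late: "\<And>t. t1 \<le> t \<Longrightarrow> t < T \<Longrightarrow> m1 \<le> lam 1 t"
    using lam_bounded_below_near_T[OF one_index _ t1(2) _ s close] by blast
  obtain m where early: "\<And>t. t \<in> {0..t1} \<Longrightarrow> m \<le> lam 1 t"
    using lam_bounded_below_Icc[OF one_index t1(2)] by blast
  have "min m m1 \<le> lam 1 t" if "t \<in> {0..<T}" for t
    using that early[of t] late[of t] by (cases "t \<le> t1") auto
  then show False using lam1_unbounded_below by blast
qed

context
  fixes j assumes j: "j \<in> {1..n}" and gap: "lam0 1 < lam0 j"
begin

lemma lam1_less: "t \<in> {0..<T} \<Longrightarrow> lam 1 t < lam j t"
  using lam_less_if_init_less[OF j one_index _ gap] .

lemma init_gap_pos: "0 < lam0 j - lam0 1"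
  using gap by simp

lemma ratio_continuous:
  assumes "0 \<le> a" "c < T"
  shows "continuous_on {a..c} (\<lambda>t. lam 1 t / (lam j t - lam 1 t))"
proof (rule continuous_on_divide)
  show "continuous_on {a..c} (lam 1)" "continuous_on {a..c} (\<lambda>t. lam j t - lam 1 t)"
    using lam_continuous_Icc[OF one_index assms] lam_continuous_Icc[OF j assms]
    by (auto intro: continuous_on_diff)
  show "\<forall>t\<in>{a..c}. lam j t - lam 1 t \<noteq> 0"
  proof
    fix t assume "t \<in> {a..c}"
    then have "lam 1 t < lam j t" using assms by (intro lam1_less) auto
    then show "lam j t - lam 1 t \<noteq> 0" by simp
  qed
qed

lemma ratio_bounded_near_T:
  obtains t0 where "0 \<le> t0" "t0 < T" and "\<And>t. t0 \<le> t \<Longrightarrow> t < T \<Longrightarrow>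
    min (lam 1 t0 / (lam j t0 - lam 1 t0)) (-2) \<le> lam 1 t / (lam j t - lam 1 t) \<and>
    lam 1 t / (lam j t - lam 1 t) < 0"
proof -
  define K where "K = k * cb / real n"
  have K: "0 \<le> K" using k cb by (simp add: K_def)
  have "eventually (\<lambda>t. lam 1 t \<le> - (sqrt (2 * K) + 1)) (at_left T)"
    using lam1_tendsto_at_bot unfolding filterlim_at_bot by blast
  then have "\<exists>b<T. \<forall>t>b. t < T \<longrightarrow> lam 1 t \<le> - (sqrt (2 * K) + 1)"
    by (simp only: eventually_at_left[OF T_pos])
  then obtain b where b: "b < T" "\<And>t. b < t \<Longrightarrow> t < T \<Longrightarrow> lam 1 t \<le> - (sqrt (2 * K) + 1)"
    by blast
  define t0 where "t0 = (max b 0 + T) / 2"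
  have t0: "0 \<le> t0" "t0 < T" "b < t0" using b(1) T_pos by (auto simp: t0_def)
  show ?thesis
  proof (rule that[OF t0(1,2)], rule conjI)
    fix t assume t: "t0 \<le> t" "t < T"
    show "min (lam 1 t0 / (lam j t0 - lam 1 t0)) (-2) \<le> lam 1 t / (lam j t - lam 1 t)"
    proof (rule riccati_ratio_lower_bound[where q="\<lambda>x. k / real n * (rho x - cb)" and K=K])
      show "continuous_on {t0..t} (lam 1)" "continuous_on {t0..t} (lam j)"
        using t t0 by (intro lam_continuous_Icc one_index j; simp)+
      show "lam 1 x < lam j x" if "x \<in> {t0..t}" for x using that t t0 lam1_less by simp
      fix x assume x: "t0 < x" "x < t"
      then have xT: "x \<in> {0..<T}" "0 < x" "x < T" using t t0 by auto
      show "(lam 1 has_real_derivative - (lam 1 x)\<^sup>2 + k / real n * (rho x - cb)) (at x)"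
        "(lam j has_real_derivative - (lam j x)\<^sup>2 + k / real n * (rho x - cb)) (at x)"
        using lam_deriv_interior[OF one_index xT(2,3)] lam_deriv_interior[OF j xT(2,3)] by auto
      show "- K \<le> k / real n * (rho x - cb)"
        using forcing_lower_bound[OF xT(1)] by (simp add: K_def)
      have "sqrt (2 * K) < - lam 1 x" using b(2)[of x] x t0 t by simp
      then show "2 * K < (lam 1 x)\<^sup>2"
        using power_strict_mono[of "sqrt (2 * K)" "- lam 1 x" 2] K by simp
    qed (use t in simp)
    have "lam 1 t < 0" using b(2)[of t] t t0 real_sqrt_ge_zero[of "2 * K"] K by linarith
    then show "lam 1 t / (lam j t - lam 1 t) < 0"
      using lam1_less[of t] t t0 by (simp add: divide_neg_pos)
  qed
qed

lemma ratio_bounded: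
  obtains R where "\<And>t. t \<in> {0..<T} \<Longrightarrow> \<bar>lam 1 t / (lam j t - lam 1 t)\<bar> \<le> R"
proof -
  let ?r = "\<lambda>t. lam 1 t / (lam j t - lam 1 t)"
  obtain t0 where t0: "0 \<le> t0" "t0 < T"
    and late: "\<And>t. t0 \<le> t \<Longrightarrow> t < T \<Longrightarrow> min (?r t0) (-2) \<le> ?r t \<and> ?r t < 0"
    using ratio_bounded_near_T by blast
  have "bounded (?r ` {0..t0})"
    by (intro compact_imp_bounded compact_continuous_image ratio_continuous t0(2) compact_Icc
        order_refl)
  then obtain R0 where R0: "\<And>t. t \<in> {0..t0} \<Longrightarrow> \<bar>?r t\<bar> \<le> R0"
    unfolding bounded_real by blast
  show ?thesis
  proof
    fix t assume t: "t \<in> {0..<T}"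
    show "\<bar>?r t\<bar> \<le> max R0 \<bar>min (?r t0) (-2)\<bar>"
    proof (cases "t \<le> t0")
      case True
      then show ?thesis using R0[of t] t by auto
    next
      case False
      then have "min (?r t0) (-2) \<le> ?r t" "?r t < 0" using late[of t] t by auto
      then show ?thesis by linarith
    qed
  qed
qed

lemma u1_times_uj_eq:
  assumes "t \<in> {0..<T}"
  shows "exp_primitive (lam 1) t * exp_primitive (lam j) t
           = (lam0 j - lam0 1) / (lam j t - lam 1 t)"
  using gap_conserved[OF j one_index assms] lam1_less[OF assms] by (simp add: field_simps)

lemma deriv_u1_times_uj_bounded:
  "\<exists>M. \<forall>t\<in>{0..<T}. \<forall>d. (exp_primitive (lam 1) has_real_derivative d) (at t within {0..<T})
      \<longrightarrow> \<bar>d * exp_primitive (lam j) t\<bar> \<le> M"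
proof -
  obtain R where R: "\<And>t. t \<in> {0..<T} \<Longrightarrow> \<bar>lam 1 t / (lam j t - lam 1 t)\<bar> \<le> R"
    using ratio_bounded by blast
  have "\<bar>d * exp_primitive (lam j) t\<bar> \<le> (lam0 j - lam0 1) * R"
    if t: "t \<in> {0..<T}" and d: "(exp_primitive (lam 1) has_real_derivative d) (at t within {0..<T})"
    for t d
  proof -
    have "d = lam 1 t * exp_primitive (lam 1) t"
      using has_real_derivative_unique_Ico[OF t d exp_primitive_deriv[OF one_index t]] .
    then have "d * exp_primitive (lam j) t
        = lam 1 t * (exp_primitive (lam 1) t * exp_primitive (lam j) t)"
      by (simp add: ac_simps)
    also have "\<dots> = (lam0 j - lam0 1) * (lam 1 t / (lam j t - lam 1 t))"
      unfolding u1_times_uj_eq[OF t] by simp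
    finally show ?thesis
      using mult_left_mono[OF R[OF t] less_imp_le[OF init_gap_pos]] init_gap_pos
      by (simp add: abs_mult)
  qed
  then show ?thesis by blast
qed

lemma u1_times_deriv_uj_bounded:
  "\<exists>M. \<forall>t\<in>{0..<T}. \<forall>d. (exp_primitive (lam j) has_real_derivative d) (at t within {0..<T})
      \<longrightarrow> \<bar>exp_primitive (lam 1) t * d\<bar> \<le> M"
proof -
  obtain R where R: "\<And>t. t \<in> {0..<T} \<Longrightarrow> \<bar>lam 1 t / (lam j t - lam 1 t)\<bar> \<le> R"
    using ratio_bounded by blast
  have "\<bar>exp_primitive (lam 1) t * d\<bar> \<le> (lam0 j - lam0 1) * (R + 1)"
    if t: "t \<in> {0..<T}" and d: "(exp_primitive (lam j) has_real_derivative d) (at t within {0..<T})"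
    for t d
  proof -
    have "d = lam j t * exp_primitive (lam j) t"
      using has_real_derivative_unique_Ico[OF t d exp_primitive_deriv[OF j t]] .
    then have "exp_primitive (lam 1) t * d
        = lam j t * (exp_primitive (lam 1) t * exp_primitive (lam j) t)"
      by (simp add: ac_simps)
    also have "\<dots> = (lam0 j - lam0 1) * (lam 1 t / (lam j t - lam 1 t) + 1)"
      unfolding u1_times_uj_eq[OF t] using lam1_less[OF t] by (simp add: field_simps)
    finally have "exp_primitive (lam 1) t * d
        = (lam0 j - lam0 1) * (lam 1 t / (lam j t - lam 1 t) + 1)" .
    moreover have "\<bar>lam 1 t / (lam j t - lam 1 t) + 1\<bar> \<le> R + 1"
      using R[OF t] by linarith
    ultimately show ?thesis using gap by (simp add: abs_mult)
  qed
  then show ?thesis by blast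
qed

lemma u1_times_uj_tendsto_0:
  "((\<lambda>t. exp_primitive (lam 1) t * exp_primitive (lam j) t) \<longlongrightarrow> 0) (at_left T)"
proof -
  obtain R where R: "\<And>t. t \<in> {0..<T} \<Longrightarrow> \<bar>lam 1 t / (lam j t - lam 1 t)\<bar> \<le> R"
    using ratio_bounded by blast
  define D where "D = lam0 j - lam0 1"
  show ?thesis
  proof (rule tendsto_sandwich[where f="\<lambda>_. 0"])
    have "filterlim (\<lambda>t. - lam 1 t) at_top (at_left T)"
      using lam1_tendsto_at_bot by (simp add: filterlim_uminus_at_bot)
    then show "((\<lambda>t. D * R / - lam 1 t) \<longlongrightarrow> 0) (at_left T)"
      by (intro tendsto_divide_0[OF tendsto_const] filterlim_at_top_imp_at_infinity)
    have "eventually (\<lambda>t. lam 1 t \<le> -1) (at_left T)"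
      using lam1_tendsto_at_bot by (simp add: filterlim_at_bot)
    moreover have "eventually (\<lambda>t. t \<in> {0<..<T}) (at_left T)"
      using eventually_at_left_real[OF T_pos] .
    ultimately show "eventually (\<lambda>t.
        exp_primitive (lam 1) t * exp_primitive (lam j) t \<le> D * R / - lam 1 t) (at_left T)"
    proof eventually_elim
      case (elim t)
      then have t: "t \<in> {0..<T}" and neg: "lam 1 t < 0" by auto
      have "exp_primitive (lam 1) t * exp_primitive (lam j) t = D / (lam j t - lam 1 t)"
        unfolding D_def by (rule u1_times_uj_eq[OF t])
      also have "\<dots> = D * - (lam 1 t / (lam j t - lam 1 t)) / - lam 1 t"
        using neg lam1_less[OF t] by (simp add: field_simps)
      also have "\<dots> \<le> D * R / - lam 1 t"
        using R[OF t] abs_ge_minus_self[of "lam 1 t / (lam j t - lam 1 t)"] neg init_gap_pos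
        by (intro divide_right_mono mult_left_mono) (auto simp: D_def)
      finally show ?case .
    qed
    show "eventually (\<lambda>t. 0 \<le> exp_primitive (lam 1) t * exp_primitive (lam j) t) (at_left T)"
      by (simp add: exp_primitive_pos less_imp_le)
  qed simp
qed

end

end

lemma init_order:
  fixes lam0 :: "nat \<Rightarrow> real"
  assumes J: "1 \<le> J"
    and eq: "\<forall>i\<in>{1..J}. lam0 i = lam0 1"
    and gap: "J < n \<longrightarrow> lam0 J < lam0 (J + 1)"
    and ord: "\<forall>i. J + 1 \<le> i \<and> i < n \<longrightarrow> lam0 i \<le> lam0 (i + 1)"
  shows init_min: "i \<in> {1..n} \<Longrightarrow> lam0 1 \<le> lam0 i"
    and init_gap: "J < i \<Longrightarrow> i \<le> n \<Longrightarrow> lam0 1 < lam0 i"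
proof -
  have mono: "lam0 (J + 1) \<le> lam0 (J + 1 + d)" if "J + 1 + d \<le> n" for d
    using that
  proof (induction d)
    case (Suc d)
    then have "lam0 (J + 1) \<le> lam0 (J + 1 + d)" by simp
    also have "\<dots> \<le> lam0 (J + 1 + d + 1)" using ord[rule_format, of "J + 1 + d"] Suc.prems by simp
    finally show ?case by simp
  qed simp
  show less: "lam0 1 < lam0 i" if "J < i" "i \<le> n" for i
  proof -
    have "lam0 1 = lam0 J" using eq[rule_format, of J] J by simp
    also have "\<dots> < lam0 (J + 1)" using gap that by simp
    also have "\<dots> \<le> lam0 i" using mono[of "i - J - 1"] that by simp
    finally show ?thesis .
  qed
  show "lam0 1 \<le> lam0 i" if "i \<in> {1..n}" for i
  proof (cases "i \<le> J")
    case True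
    then show ?thesis using eq[rule_format, of i] that by simp
  next
    case False
    then show ?thesis using less[of i] that by simp
  qed
qed

theorem corollary3p3:
  fixes n J :: nat and k cb rho0 tB :: real
    and lam0 :: "nat \<Rightarrow> real" and lam :: "nat \<Rightarrow> real \<Rightarrow> real" and rho :: "real \<Rightarrow> real"
    and u :: "nat \<Rightarrow> real \<Rightarrow> real"
  assumes n: "n \<ge> 2" and k: "k > 0" and cb: "cb > 0" and rho0: "rho0 > 0"
    and J: "1 \<le> J" "J \<le> n"
    and eq: "\<forall>i\<in>{1..J}. lam0 i = lam0 1"
    and gap: "J < n \<longrightarrow> lam0 J < lam0 (J + 1)"
    and ord: "\<forall>i. J + 1 \<le> i \<and> i < n \<longrightarrow> lam0 i \<le> lam0 (i + 1)"
    and sol: "maximal_solution n k cb rho0 lam0 tB lam rho"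
    and tB: "0 < tB"
    and u_def: "\<forall>i t. u i t = exp (integral {0..t} (lam i))"
  shows "\<forall>j. J < j \<and> j \<le> n \<longrightarrow>
           (\<exists>M. \<forall>t\<in>{0..<tB}. \<forall>d. (u 1 has_real_derivative d) (at t within {0..<tB})
                 \<longrightarrow> \<bar>d * u j t\<bar> \<le> M) \<and>
           (\<exists>M. \<forall>t\<in>{0..<tB}. \<forall>d. (u j has_real_derivative d) (at t within {0..<tB})
                 \<longrightarrow> \<bar>u 1 t * d\<bar> \<le> M) \<and>
           ((\<lambda>t. u 1 t * u j t) \<longlongrightarrow> 0) (at_left tB)"
proof -
  interpret maximal_riccati_solution n k cb rho0 lam0 tB lam rho
    using sol n k cb rho0 init_min[OF J(1) eq gap ord]
    by unfold_locales (auto simp: maximal_solution_def)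
  have u: "u = (\<lambda>i. exp_primitive (lam i))"
    using u_def by (simp add: fun_eq_iff exp_primitive_def)
  have index: "j \<in> {1..n} \<and> lam0 1 < lam0 j" if "J < j \<and> j \<le> n" for j
    using that J init_gap[OF J(1) eq gap ord] by auto
  show ?thesis
    unfolding u
    by (intro allI impI conjI; drule index; elim conjE;
        rule deriv_u1_times_uj_bounded u1_times_deriv_uj_bounded u1_times_uj_tendsto_0; assumption)
qed

end
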